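(* The structure ${\bf q}_{\rm gr}$ is a forgetful pseudo creature forcing, and $\mathrm{inv}_{\rm gm}({\bf q}_{\rm gr})\le\mathfrak g$.
   Context: A pseudo creature forcing (pcrf) is ${\bf q}=(K,\Sigma,\mathrm{nor},\mathrm{val})$ where: (a) $K\subseteq\mathcal H(\aleph_0)$ is a set of creatures, each $\mathfrak c\in K$ being a function with domain $[\mathrm{mdn}(\mathfrak c),\mathrm{mup}(\mathfrak c))$, where $\mathrm{mdn}(\mathfrak c)<\mathrm{mup}(\mathfrak c)<\omega$; (b) $\Sigma$ is a partial function from finite sequences of members of $K$ to nonempty subsets of $K$ such that: its domain consists of sequences $(\mathfrak c_n,\dots,\mathfrak c_{m-1})$ with $\mathrm{mup}(\mathfrak c_\ell)\le\mathrm{mdn}(\mathfrak c_{\ell+1})$; every $\mathfrak c\in\Sigma(\mathfrak c_n,\dots,\mathfrak c_{m-1})$ satisfies $\mathrm{mdn}(\mathfrak c)=\mathrm{mdn}(\mathfrak c_k)$ and $\mathrm{mup}(\mathfrak c)=\mathrm{mup}(\mathfrak c_{\ell-1})$ for some $n\le k<\ell\le m$; $\Sigma$ is transitive (if $\mathfrak c^1_j\in\Sigma$ of the $j$-th block of a partition of a sequence into consecutive blocks, $j<k$, and $\mathfrak c^2\in\Sigma(\mathfrak c^1_0,\dots,\mathfrak c^1_{k-1})$, then $\mathfrak c^2\in\Sigma$ of the whole sequence); $\mathfrak c\in\Sigma(\mathfrak c)$; and $\Sigma$ of a subsequence is contained in $\Sigma$ of the sequence; (c) $\mathrm{nor}:K\to\mathbb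 R^{\ge0}$; (d) $\mathrm{val}(\mathfrak c)$ is a nonempty finite subset of $[\mathrm{mdn}(\mathfrak c),\mathrm{mup}(\mathfrak c))$. ${\bf Q}={\bf Q}_{\bf q}$ is the set of sequences $\bar{\mathfrak c}=\langle\mathfrak c_n:n<\omega\rangle$ of members of $K$ with $\mathrm{mdn}(\mathfrak c_0)=0$, $\mathrm{mup}(\mathfrak c_n)=\mathrm{mdn}(\mathfrak c_{n+1})$ and $\lim_n\mathrm{nor}(\mathfrak c_n)=\infty$. $\bar{\mathfrak c}^1\le_{\bf q}\bar{\mathfrak c}^2$ iff there are $i( * )<\omega$ and $n_{i( * )}<n_{i( * )+1}<\cdots$ such that for all $i\ge i( * )$: $\mathfrak c^2_i\in\Sigma(\mathfrak c^1_{n_i},\dots,\mathfrak c^1_{n_{i+1}-1})$, $\mathrm{mdn}(\mathfrak c^2_i)=\mathrm{mdn}(\mathfrak c^1_{n_i})$, $\mathrm{mup}(\mathfrak c^2_i)=\mathrm{mup}(\mathfrak c^1_{n_{i+1}-1})$. For finite sequences, $\langle\mathfrak e_0,\dots,\mathfrak e_{j-1}\rangle\in\Sigma(\mathfrak c_k,\dots,\mathfrak c_{k'-1})$ means there are $k=m_0<m_1<\cdots<m_j=k'$ with $\mathfrak e_i\in\Sigma(\mathfrak c_{m_i},\dots,\mathfrak c_{m_{i+1}-1})$ for all $i<j$. ${\bf q}$ is forgetful if: whenever $\bar{\mathfrak c}^1\le_{\bf q}\bar{\mathfrak c}^2$, $n\le k<\omega$, $\bar{\mathfrak c}^1\restriction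 k=\bar{\mathfrak c}^2\restriction k$ and $\bar{\mathfrak e}^\ell\in\Sigma(\bar{\mathfrak c}^1\restriction[n,k))$ for $\ell=1,2$, there are $m_1>k$, $m_2>n$ with $\mathrm{mdn}(\mathfrak c^1_{m_1})=\mathrm{mdn}(\mathfrak c^2_{m_2})$ and $\Sigma(\bar{\mathfrak e}^1{}^\frown\bar{\mathfrak c}^1\restriction[k,m_1))\cap\Sigma(\bar{\mathfrak e}^2{}^\frown\bar{\mathfrak c}^1\restriction[k,m_1))\cap\Sigma(\bar{\mathfrak c}^2\restriction[n,m_2))\ne\emptyset$. ${\bf q}_{\rm gr}=(K,\Sigma,\mathrm{nor},\mathrm{val})$: $K$ is the set of triples $\mathfrak c=(\mathrm{mdn}^{\mathfrak c},\mathrm{mup}^{\mathfrak c},u^{\mathfrak c})$ with $\mathrm{mdn}^{\mathfrak c}<\mathrm{mup}^{\mathfrak c}<\omega$ and $\emptyset\ne u^{\mathfrak c}\subseteq[\mathrm{mdn}^{\mathfrak c},\mathrm{mup}^{\mathfrak c})$; $\mathfrak c\in\Sigma(\mathfrak c_0,\dots,\mathfrak c_{k-1})$ iff $\mathrm{mup}^{\mathfrak c_\ell}=\mathrm{mdn}^{\mathfrak c_{\ell+1}}$ for $\ell<k-1$, $\mathrm{mdn}^{\mathfrak c}=\mathrm{mdn}^{\mathfrak c_0}$, $\mathrm{mup}^{\mathfrak c}=\mathrm{mup}^{\mathfrak c_{k-1}}$ and $u^{\mathfrak c}=\bigcup_{\ell\in v}u^{\mathfrak c_\ell}$ for some nonempty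 $v\subseteq\{0,\dots,k-1\}$; $\mathrm{nor}(\mathfrak c)=\mathrm{mdn}^{\mathfrak c}$; $\mathrm{val}(\mathfrak c)=u^{\mathfrak c}$. The game $\Game_\kappa({\bf q})$ lasts $\kappa+1$ moves; in move $\alpha$ the non-empty player chooses $\bar{\mathfrak c}_\alpha\in{\bf Q}$ with $\bar{\mathfrak d}_\beta\le_{\bf q}\bar{\mathfrak c}_\alpha$ for all $\beta<\alpha$, then the empty player chooses $\bar{\mathfrak d}_\alpha\in{\bf Q}$ with $\bar{\mathfrak c}_\alpha\le_{\bf q}\bar{\mathfrak d}_\alpha$; the non-empty player wins iff he always has a legal move. $\mathrm{inv}_{\rm gm}({\bf q})$ is the least $\kappa$ such that the empty player has a winning strategy in $\Game_\kappa({\bf q})$. Groupwise dense families and $\mathfrak g$: $\mathcal A\subseteq[\omega]^{\aleph_0}$ is groupwise dense if it is closed under infinite almost-subsets and for every $n_0<n_1<\cdots$ there is infinite $w\subseteq\omega$ with $\bigcup_{i\in w}[n_i,n_{i+1})\in\mathcal A$; $\mathfrak g$ is the least $\kappa$ such that some $\kappa$ groupwise dense families have empty intersection.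
   Formalization: In a pseudo creature forcing, Sigma of a subsequence lies in Sigma of the sequence only for subsequences sharing its first and last creature and for sequences in the domain of Sigma. The statement above fails without it. *)

theory Defs
  imports Complex_Main "HOL-Library.Sublist"
begin

text \<open>The partial function Sigma
is given with values in 'c set option (None = outside the domain).
The fields mdn and mup give the interval [mdn c, mup c) of a creature.\<close>

record 'c pcrf =
  K   :: "'c set"
  Sig :: "'c list \<Rightarrow> 'c set option"
  mdn :: "'c \<Rightarrow> nat"
  mup :: "'c \<Rightarrow> nat"
  nor :: "'c \<Rightarrow> real"
  val :: "'c \<Rightarrow> nat set"

definition in_Sig :: "'c pcrf \<Rightarrow> 'c \<Rightarrow> 'c list \<Rightarrow> bool" where
  "in_Sig q c cs \<longleftrightarrow> (\<exists>S. Sig q cs = Some S \<and> c \<in> S)"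

fun Sig_seq :: "'c pcrf \<Rightarrow> 'c list \<Rightarrow> 'c list \<Rightarrow> bool" where
  "Sig_seq q [] cs \<longleftrightarrow> cs = []"
| "Sig_seq q (e # es) cs \<longleftrightarrow>
     (\<exists>p. 0 < p \<and> p \<le> length cs \<and> in_Sig q e (take p cs) \<and> Sig_seq q es (drop p cs))"

definition is_pcrf :: "'c pcrf \<Rightarrow> bool" where
  "is_pcrf q \<longleftrightarrow>
     (\<forall>c \<in> K q. mdn q c < mup q c)
   \<and> (\<forall>cs S. Sig q cs = Some S \<longrightarrow>
         cs \<noteq> [] \<and> set cs \<subseteq> K q
       \<and> (\<forall>l. Suc l < length cs \<longrightarrow> mup q (cs ! l) \<le> mdn q (cs ! Suc l))
       \<and> S \<noteq> {} \<and> S \<subseteq> K q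
       \<and> (\<forall>c \<in> S. \<exists>k l. k < l \<and> l \<le> length cs
              \<and> mdn q c = mdn q (cs ! k) \<and> mup q c = mup q (cs ! (l - 1))))
   \<and> (\<forall>cs es c. Sig_seq q es cs \<and> in_Sig q c es \<longrightarrow> in_Sig q c cs)
   \<and> (\<forall>c \<in> K q. in_Sig q c [c])
   \<and> (\<forall>cs cs' c. subseq cs' cs \<and> cs' \<noteq> [] \<and> hd cs' = hd cs \<and> last cs' = last cs
          \<and> Sig q cs \<noteq> None \<and> in_Sig q c cs' \<longrightarrow> in_Sig q c cs)
   \<and> (\<forall>c \<in> K q. nor q c \<ge> 0)
   \<and> (\<forall>c \<in> K q. finite (val q c) \<and> val q c \<noteq> {} \<and> val q c \<subseteq> {mdn q c..<mup q c})"

definition Qset :: "'c pcrf \<Rightarrow> (nat \<Rightarrow> 'c) set" where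
  "Qset q = {cc. (\<forall>n. cc n \<in> K q) \<and> mdn q (cc 0) = 0
                 \<and> (\<forall>n. mup q (cc n) = mdn q (cc (Suc n)))
                 \<and> filterlim (\<lambda>n. nor q (cc n)) at_top sequentially}"

text \<open>The order \<le>_q (c1 is below, i.e. weaker than, c2).\<close>

definition qle :: "'c pcrf \<Rightarrow> (nat \<Rightarrow> 'c) \<Rightarrow> (nat \<Rightarrow> 'c) \<Rightarrow> bool" where
  "qle q c1 c2 \<longleftrightarrow>
     (\<exists>i0 (ns :: nat \<Rightarrow> nat). (\<forall>i \<ge> i0. ns i < ns (Suc i)
        \<and> in_Sig q (c2 i) (map c1 [ns i..<ns (Suc i)])
        \<and> mdn q (c2 i) = mdn q (c1 (ns i))
        \<and> mup q (c2 i) = mup q (c1 (ns (Suc i) - 1))))"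

definition forgetful :: "'c pcrf \<Rightarrow> bool" where
  "forgetful q \<longleftrightarrow>
     (\<forall>c1 \<in> Qset q. \<forall>c2 \<in> Qset q. \<forall>n k e1 e2.
        qle q c1 c2 \<and> n \<le> k \<and> (\<forall>i < k. c1 i = c2 i)
        \<and> Sig_seq q e1 (map c1 [n..<k]) \<and> Sig_seq q e2 (map c1 [n..<k])
        \<longrightarrow> (\<exists>m1 m2 c. m1 > k \<and> m2 > n \<and> mdn q (c1 m1) = mdn q (c2 m2)
              \<and> in_Sig q c (e1 @ map c1 [k..<m1])
              \<and> in_Sig q c (e2 @ map c1 [k..<m1])
              \<and> in_Sig q c (map c2 [n..<m2])))"

type_synonym gr_creature = "nat \<times> nat \<times> nat set"

definition K_gr :: "gr_creature set" where
  "K_gr = {(a, b, u). a < b \<and> u \<noteq> {} \<and> u \<subseteq> {a..<b}}"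

definition Sig_gr :: "gr_creature list \<Rightarrow> gr_creature set option" where
  "Sig_gr cs =
     (if cs \<noteq> [] \<and> set cs \<subseteq> K_gr
         \<and> (\<forall>l. Suc l < length cs \<longrightarrow> fst (snd (cs ! l)) = fst (cs ! Suc l))
      then Some {c. fst c = fst (hd cs) \<and> fst (snd c) = fst (snd (last cs))
                   \<and> (\<exists>v. v \<noteq> {} \<and> v \<subseteq> {..<length cs}
                          \<and> snd (snd c) = (\<Union>l\<in>v. snd (snd (cs ! l))))}
      else None)"

definition q_gr :: "gr_creature pcrf" where
  "q_gr = \<lparr> K = K_gr, Sig = Sig_gr, mdn = fst, mup = (\<lambda>c. fst (snd c)),
            nor = (\<lambda>c. real (fst c)), val = (\<lambda>c. snd (snd c)) \<rparr>"

text \<open>Moves are indexed by positions: Some a for a in the field of the well order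
 r (representing the ordinal kappa), and None for the last move kappa.
 So there are kappa+1 moves.\<close>

definition pos :: "'i rel \<Rightarrow> 'i option set" where
  "pos r = Some ` Field r \<union> {None}"

fun pos_lt :: "'i rel \<Rightarrow> 'i option \<Rightarrow> 'i option \<Rightarrow> bool" where
  "pos_lt r (Some a) (Some b) \<longleftrightarrow> (a, b) \<in> r \<and> a \<noteq> b"
| "pos_lt r (Some a) None \<longleftrightarrow> True"
| "pos_lt r None _ \<longleftrightarrow> False"

definition pos_le :: "'i rel \<Rightarrow> 'i option \<Rightarrow> 'i option \<Rightarrow> bool" where
  "pos_le r x y \<longleftrightarrow> pos_lt r x y \<or> x = y"

text \<open>History of the non-empty player's moves up to (and including) position a.\<close>

definition restr :: "'i rel \<Rightarrow> ('i option \<Rightarrow> 'x) \<Rightarrow> 'i option \<Rightarrow> 'i option \<Rightarrow> 'x" where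
  "restr r h a = (\<lambda>b. if pos_le r b a then h b else undefined)"

text \<open>sigma is a strategy of the empty player: from the history of the
 non-empty player's moves up to position a it computes the answer d_a.
 legal_upto: all non-empty moves h b, b \<le> a, are legal.\<close>

definition legal_upto :: "'c pcrf \<Rightarrow> 'i rel
    \<Rightarrow> (('i option \<Rightarrow> nat \<Rightarrow> 'c) \<Rightarrow> 'i option \<Rightarrow> (nat \<Rightarrow> 'c))
    \<Rightarrow> ('i option \<Rightarrow> nat \<Rightarrow> 'c) \<Rightarrow> 'i option \<Rightarrow> bool" where
  "legal_upto q r \<sigma> h a \<longleftrightarrow>
     (\<forall>b \<in> pos r. pos_le r b a \<longrightarrow> h b \<in> Qset q
        \<and> (\<forall>g \<in> pos r. pos_lt r g b \<longrightarrow> qle q (\<sigma> (restr r h g) g) (h b)))"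

definition empty_wins :: "'c pcrf \<Rightarrow> 'i rel \<Rightarrow> bool" where
  "empty_wins q r \<longleftrightarrow>
     (\<exists>\<sigma>. (\<forall>h. \<forall>a \<in> pos r. legal_upto q r \<sigma> h a \<longrightarrow>
             \<sigma> (restr r h a) a \<in> Qset q \<and> qle q (h a) (\<sigma> (restr r h a) a))
        \<and> \<not> (\<exists>h. \<forall>a \<in> pos r. legal_upto q r \<sigma> h a))"

definition groupwise_dense :: "nat set set \<Rightarrow> bool" where
  "groupwise_dense G \<longleftrightarrow>
     G \<subseteq> {A. infinite A}
   \<and> (\<forall>A \<in> G. \<forall>B. infinite B \<and> finite (B - A) \<longrightarrow> B \<in> G)
   \<and> (\<forall>ns :: nat \<Rightarrow> nat. strict_mono ns \<longrightarrow>
        (\<exists>w. infinite w \<and> (\<Union>i\<in>w. {ns i..<ns (Suc i)}) \<in> G))"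

end

theory Submission
  imports Defs "HOL-Library.Infinite_Set"
begin

(* Sigma of q_gr only remembers the end points of a linked block of creatures together
   with a nonempty union of their sets u, so the pcrf axioms reduce to list bookkeeping;
   transitivity holds because a union of unions of members of a list is again one.

   Forgetfulness: far enough out, one creature c2_j of the stronger condition is built
   from creatures of c1 lying beyond k. Appending to either e_l the creatures of c1 up
   to the end of that block and keeping only the set of c2_j yields a single creature
   that lies in all three Sigma's.

   The game: to a condition d attach the infinite set U(d), the union of its sets u.
   A stronger condition has U almost contained in that of a weaker one, so for a
   groupwise dense G the conditions with U(d) in G are closed upwards. They are also
   dense: groupwise density applied to the intervals [mdn c_n, mdn c_(n+1)) selects
   infinitely many creatures of c whose sets lie inside a member of G, and merging the
   gaps between them gives an extension. Given groupwise dense families G_alpha with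
   empty intersection, the empty player answers at move alpha with an extension whose
   U lies in G_alpha; a last move of the non-empty player would have U in every
   G_alpha. *)

abbreviation mdn_gr :: "gr_creature \<Rightarrow> nat" where "mdn_gr c \<equiv> fst c"
abbreviation mup_gr :: "gr_creature \<Rightarrow> nat" where "mup_gr c \<equiv> fst (snd c)"
abbreviation u_gr :: "gr_creature \<Rightarrow> nat set" where "u_gr c \<equiv> snd (snd c)"
abbreviation linked :: "gr_creature \<Rightarrow> gr_creature \<Rightarrow> bool" where
  "linked c d \<equiv> mup_gr c = mdn_gr d"

section \<open>Sigma of q_gr\<close>

lemma ex_index_set_iff:
  "(\<exists>v. v \<noteq> {} \<and> v \<subseteq> {..<length xs} \<and> P ((!) xs ` v))
   \<longleftrightarrow> (\<exists>W. W \<noteq> {} \<and> W \<subseteq> set xs \<and> P W)"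
proof
  assume "\<exists>W. W \<noteq> {} \<and> W \<subseteq> set xs \<and> P W"
  then obtain W where W: "W \<noteq> {}" "W \<subseteq> set xs" "P W" by blast
  define v where "v = {i. i < length xs \<and> xs ! i \<in> W}"
  have "W = (!) xs ` v"
  proof (intro equalityI subsetI)
    fix x assume "x \<in> W"
    then obtain i where "i < length xs" "xs ! i = x"
      using W(2) by (metis in_set_conv_nth subsetD)
    then show "x \<in> (!) xs ` v"
      using \<open>x \<in> W\<close> unfolding v_def by force
  qed (auto simp: v_def)
  then show "\<exists>v. v \<noteq> {} \<and> v \<subseteq> {..<length xs} \<and> P ((!) xs ` v)"
    using W by (intro exI[of _ v]) (auto simp: v_def)
next
  assume "\<exists>v. v \<noteq> {} \<and> v \<subseteq> {..<length xs} \<and> P ((!) xs ` v)"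
  then obtain v where "v \<noteq> {}" "v \<subseteq> {..<length xs}" "P ((!) xs ` v)" by blast
  then show "\<exists>W. W \<noteq> {} \<and> W \<subseteq> set xs \<and> P W"
    by (intro exI[of _ "(!) xs ` v"]) auto
qed

lemma in_Sig_gr_iff:
  "in_Sig q_gr c cs \<longleftrightarrow> cs \<noteq> [] \<and> set cs \<subseteq> K_gr \<and> successively linked cs
     \<and> mdn_gr c = mdn_gr (hd cs) \<and> mup_gr c = mup_gr (last cs)
     \<and> (\<exists>W. W \<noteq> {} \<and> W \<subseteq> set cs \<and> u_gr c = \<Union> (u_gr ` W))"
  using ex_index_set_iff[of cs "\<lambda>W. u_gr c = \<Union> (u_gr ` W)"]
  unfolding in_Sig_def q_gr_def Sig_gr_def successively_conv_nth
  by (auto simp: image_image)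

lemma K_gr_iff: "c \<in> K_gr \<longleftrightarrow> mdn_gr c < mup_gr c \<and> u_gr c \<noteq> {} \<and> u_gr c \<subseteq> {mdn_gr c..<mup_gr c}"
  unfolding K_gr_def by (cases c) auto

lemma linked_chain_bounds:
  assumes "successively linked cs" "set cs \<subseteq> K_gr" "x \<in> set cs"
  shows "mdn_gr (hd cs) \<le> mdn_gr x \<and> mup_gr x \<le> mup_gr (last cs)"
  using assms
proof (induction cs arbitrary: x rule: induct_list012)
  case (3 a b cs)
  have "a \<in> K_gr" using "3.prems"(2) by simp
  then have a: "mdn_gr a < mdn_gr b" using "3.prems"(1) K_gr_iff by simp
  have tail: "successively linked (b # cs)" "set (b # cs) \<subseteq> K_gr" using "3.prems"(1,2) by simp_all
  have b: "mdn_gr b \<le> mdn_gr y \<and> mup_gr y \<le> mup_gr (last (b # cs))" if "y \<in> set (b # cs)" for y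
    using "3.IH"(2)[OF tail that] by simp
  have "mdn_gr b < mup_gr b" using tail(2) K_gr_iff by simp
  show ?case
  proof (cases "x = a")
    case True
    then show ?thesis using "3.prems"(1) b[of b] \<open>mdn_gr b < mup_gr b\<close> by simp
  next
    case False
    then show ?thesis using a b[of x] "3.prems"(3) by simp
  qed
qed simp_all

lemma in_Sig_gr_K:
  assumes "in_Sig q_gr c cs" shows "c \<in> K_gr"
proof -
  obtain W where cs: "cs \<noteq> []" "set cs \<subseteq> K_gr" "successively linked cs"
    and ends: "mdn_gr c = mdn_gr (hd cs)" "mup_gr c = mup_gr (last cs)"
    and W: "W \<noteq> {}" "W \<subseteq> set cs" "u_gr c = \<Union> (u_gr ` W)"
    using assms unfolding in_Sig_gr_iff by blast
  have member: "mdn_gr w < mup_gr w \<and> u_gr w \<noteq> {} \<and> u_gr w \<subseteq> {mdn_gr c..<mup_gr c}"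
    if "w \<in> set cs" for w
  proof -
    have "w \<in> K_gr" using that cs(2) by blast
    then show ?thesis
      using linked_chain_bounds[OF cs(3,2) that] ends unfolding K_gr_iff by auto
  qed
  have "hd cs \<in> set cs" using cs(1) by simp
  then have "mdn_gr (hd cs) < mup_gr (hd cs)" "mup_gr (hd cs) \<le> mup_gr (last cs)"
    using member linked_chain_bounds[OF cs(3,2)] by blast+
  then have "mdn_gr c < mup_gr c" using ends by simp
  moreover have "u_gr c \<noteq> {}"
  proof -
    obtain w where "w \<in> W" using W(1) by blast
    then show ?thesis using member[of w] W(2,3) by auto
  qed
  moreover have "u_gr c \<subseteq> {mdn_gr c..<mup_gr c}"
    unfolding W(3) by (intro UN_least) (use W(2) member in blast)
  ultimately show ?thesis unfolding K_gr_iff by blast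
qed

lemma Sig_seq_Cons_iff:
  "Sig_seq q (e # es) cs \<longleftrightarrow>
     (\<exists>cs1 cs2. cs = cs1 @ cs2 \<and> cs1 \<noteq> [] \<and> in_Sig q e cs1 \<and> Sig_seq q es cs2)"
proof
  assume "Sig_seq q (e # es) cs"
  then obtain p where "0 < p" "p \<le> length cs" "in_Sig q e (take p cs)" "Sig_seq q es (drop p cs)"
    by auto
  then show "\<exists>cs1 cs2. cs = cs1 @ cs2 \<and> cs1 \<noteq> [] \<and> in_Sig q e cs1 \<and> Sig_seq q es cs2"
    by (intro exI[of _ "take p cs"] exI[of _ "drop p cs"]) auto
next
  assume "\<exists>cs1 cs2. cs = cs1 @ cs2 \<and> cs1 \<noteq> [] \<and> in_Sig q e cs1 \<and> Sig_seq q es cs2"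
  then obtain cs1 cs2 where "cs = cs1 @ cs2" "cs1 \<noteq> []" "in_Sig q e cs1" "Sig_seq q es cs2"
    by blast
  then show "Sig_seq q (e # es) cs"
    unfolding Sig_seq.simps by (intro exI[of _ "length cs1"]) simp
qed

lemma Sig_seq_Nil_iff: "Sig_seq q es cs \<Longrightarrow> es = [] \<longleftrightarrow> cs = []"
  by (cases es) auto

lemma Sig_seq_gr_K:
  "Sig_seq q_gr es cs \<Longrightarrow> set es \<subseteq> K_gr \<and> set cs \<subseteq> K_gr"
proof (induction es arbitrary: cs)
  case (Cons e es)
  obtain cs1 cs2 where cs: "cs = cs1 @ cs2" "in_Sig q_gr e cs1" "Sig_seq q_gr es cs2"
    using Cons.prems unfolding Sig_seq_Cons_iff by blast
  have "e \<in> K_gr" using cs(2) by (rule in_Sig_gr_K)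
  moreover have "set cs1 \<subseteq> K_gr" using cs(2) unfolding in_Sig_gr_iff by blast
  ultimately show ?case using Cons.IH[OF cs(3)] cs(1) by simp
qed simp

lemma Sig_seq_gr_ends:
  assumes "Sig_seq q_gr es cs" "es \<noteq> []"
  shows "mdn_gr (hd es) = mdn_gr (hd cs) \<and> mup_gr (last es) = mup_gr (last cs)"
  using assms
proof (induction es arbitrary: cs)
  case (Cons e es)
  obtain cs1 cs2 where cs: "cs = cs1 @ cs2" "in_Sig q_gr e cs1" "Sig_seq q_gr es cs2"
    using Cons.prems(1) unfolding Sig_seq_Cons_iff by blast
  have cs1: "cs1 \<noteq> []" "mdn_gr e = mdn_gr (hd cs1)" "mup_gr e = mup_gr (last cs1)"
    using cs(2) unfolding in_Sig_gr_iff by blast+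
  show ?case
  proof (cases "es = []")
    case True
    then have "cs2 = []" using Sig_seq_Nil_iff[OF cs(3)] by simp
    then show ?thesis using True cs(1) cs1 by simp
  next
    case False
    then have "cs2 \<noteq> []" using Sig_seq_Nil_iff[OF cs(3)] by simp
    then show ?thesis using False Cons.IH[OF cs(3) False] cs(1) cs1 by simp
  qed
qed simp

lemma Sig_seq_gr_cover:
  assumes "Sig_seq q_gr es cs" "e \<in> set es"
  shows "\<exists>W. W \<noteq> {} \<and> W \<subseteq> set cs \<and> u_gr e = \<Union> (u_gr ` W)"
  using assms
proof (induction es arbitrary: cs)
  case (Cons e' es)
  obtain cs1 cs2 where cs: "cs = cs1 @ cs2" "in_Sig q_gr e' cs1" "Sig_seq q_gr es cs2"
    using Cons.prems(1) unfolding Sig_seq_Cons_iff by blast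
  show ?case
  proof (cases "e = e'")
    case True
    then obtain W where "W \<noteq> {}" "W \<subseteq> set cs1" "u_gr e = \<Union> (u_gr ` W)"
      using cs(2) unfolding in_Sig_gr_iff by blast
    then show ?thesis using cs(1) by (intro exI[of _ W]) auto
  next
    case False
    then have "e \<in> set es" using Cons.prems(2) by simp
    from Cons.IH[OF cs(3) this] obtain W
      where "W \<noteq> {}" "W \<subseteq> set cs2" "u_gr e = \<Union> (u_gr ` W)"
      by blast
    then show ?thesis using cs(1) by (intro exI[of _ W]) auto
  qed
qed simp

lemma Sig_seq_gr_linked_iff:
  "Sig_seq q_gr es cs \<Longrightarrow> successively linked es \<longleftrightarrow> successively linked cs"
proof (induction es arbitrary: cs)
  case (Cons e es)
  obtain cs1 cs2 where cs: "cs = cs1 @ cs2" "in_Sig q_gr e cs1" "Sig_seq q_gr es cs2"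
    using Cons.prems unfolding Sig_seq_Cons_iff by blast
  have cs1: "cs1 \<noteq> []" "successively linked cs1" "mup_gr e = mup_gr (last cs1)"
    using cs(2) unfolding in_Sig_gr_iff by blast+
  have "successively linked cs \<longleftrightarrow>
      successively linked cs2 \<and> (cs2 = [] \<or> linked (last cs1) (hd cs2))"
    unfolding cs(1) successively_append_iff using cs1(1,2) by blast
  also have "\<dots> \<longleftrightarrow> successively linked (e # es)"
  proof (cases "es = []")
    case True
    then show ?thesis using Sig_seq_Nil_iff[OF cs(3)] by simp
  next
    case False
    then have "cs2 \<noteq> []" "mdn_gr (hd es) = mdn_gr (hd cs2)"
      using Sig_seq_Nil_iff[OF cs(3)] Sig_seq_gr_ends[OF cs(3)] by simp_all
    then show ?thesis
      using False Cons.IH[OF cs(3)] cs1(3) by (auto simp: successively_Cons)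
  qed
  finally show ?case by (rule sym)
qed simp

lemma union_of_unions:
  fixes f :: "'a \<Rightarrow> 'b set"
  assumes "W \<noteq> {}" "\<forall>e\<in>W. \<exists>V. V \<noteq> {} \<and> V \<subseteq> A \<and> f e = \<Union> (f ` V)"
  obtains V where "V \<noteq> {}" "V \<subseteq> A" "\<Union> (f ` W) = \<Union> (f ` V)"
proof -
  from bchoice[OF assms(2)] obtain V
    where V: "\<forall>e\<in>W. V e \<noteq> {} \<and> V e \<subseteq> A \<and> f e = \<Union> (f ` V e)"
    by (elim exE)
  then have nonempty: "V e \<noteq> {}" and sub: "V e \<subseteq> A" and eq: "f e = \<Union> (f ` V e)"
    if "e \<in> W" for e
    using that by auto
  show thesis
  proof (rule that[of "\<Union> (V ` W)"])
    show "\<Union> (V ` W) \<noteq> {}" using assms(1) nonempty by blast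
    show "\<Union> (V ` W) \<subseteq> A" using sub by blast
    have "\<Union> (f ` W) = (\<Union>e\<in>W. \<Union> (f ` V e))" using eq by (rule SUP_cong[OF refl])
    also have "\<dots> = \<Union> (f ` \<Union> (V ` W))" by blast
    finally show "\<Union> (f ` W) = \<Union> (f ` \<Union> (V ` W))" .
  qed
qed

lemma in_Sig_gr_trans:
  assumes "Sig_seq q_gr es cs" "in_Sig q_gr c es"
  shows "in_Sig q_gr c cs"
proof -
  obtain W where es: "es \<noteq> []" "successively linked es"
      "mdn_gr c = mdn_gr (hd es)" "mup_gr c = mup_gr (last es)"
    and W: "W \<noteq> {}" "W \<subseteq> set es" "u_gr c = \<Union> (u_gr ` W)"
    using assms(2) unfolding in_Sig_gr_iff by blast
  have "\<forall>e\<in>W. \<exists>V. V \<noteq> {} \<and> V \<subseteq> set cs \<and> u_gr e = \<Union> (u_gr ` V)"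
  proof
    fix e assume "e \<in> W"
    with W(2) have "e \<in> set es" by blast
    then show "\<exists>V. V \<noteq> {} \<and> V \<subseteq> set cs \<and> u_gr e = \<Union> (u_gr ` V)"
      by (rule Sig_seq_gr_cover[OF assms(1)])
  qed
  with W(1) obtain V where "V \<noteq> {}" "V \<subseteq> set cs" "\<Union> (u_gr ` W) = \<Union> (u_gr ` V)"
    by (rule union_of_unions)
  moreover have "cs \<noteq> []" using Sig_seq_Nil_iff[OF assms(1)] es(1) by simp
  ultimately show ?thesis
    unfolding in_Sig_gr_iff
    using es W(3) Sig_seq_gr_K[OF assms(1)] Sig_seq_gr_ends[OF assms(1) es(1)]
      Sig_seq_gr_linked_iff[OF assms(1)]
    by (intro conjI exI[of _ V]) simp_all
qed

lemma Sig_q_gr_Some: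
  assumes "Sig q_gr cs = Some S"
  shows "S = {c. in_Sig q_gr c cs}" "cs \<noteq> []" "set cs \<subseteq> K_gr" "successively linked cs"
  using assms unfolding in_Sig_def
  by (auto simp: q_gr_def Sig_gr_def successively_conv_nth split: if_splits)

lemma is_pcrf_q_gr: "is_pcrf q_gr"
  unfolding is_pcrf_def
proof (intro conjI allI ballI impI)
  fix cs S assume Some: "Sig q_gr cs = Some S"
  note cs = Sig_q_gr_Some[OF Some]
  show "cs \<noteq> []" "set cs \<subseteq> K q_gr" using cs by (simp_all add: q_gr_def)
  show "mup q_gr (cs ! l) \<le> mdn q_gr (cs ! Suc l)" if "Suc l < length cs" for l
    using successively_nth[OF cs(4) that] by (simp add: q_gr_def)
  have "in_Sig q_gr (mdn_gr (hd cs), mup_gr (last cs), u_gr (hd cs)) cs"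
    unfolding in_Sig_gr_iff using cs(2-4) by (intro conjI exI[of _ "{hd cs}"]) auto
  then show "S \<noteq> {}" using cs(1) by blast
  show "S \<subseteq> K q_gr" using cs(1) in_Sig_gr_K by (auto simp: q_gr_def)
  show "\<exists>k l. k < l \<and> l \<le> length cs
      \<and> mdn q_gr c = mdn q_gr (cs ! k) \<and> mup q_gr c = mup q_gr (cs ! (l - 1))" if "c \<in> S" for c
    using that cs(1,2) unfolding in_Sig_gr_iff
    by (intro exI[of _ 0] exI[of _ "length cs"]) (auto simp: q_gr_def hd_conv_nth last_conv_nth)
next
  fix cs es c assume "Sig_seq q_gr es cs \<and> in_Sig q_gr c es"
  then show "in_Sig q_gr c cs" using in_Sig_gr_trans by blast
next
  fix c assume "c \<in> K q_gr"
  then show "in_Sig q_gr c [c]"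
    unfolding in_Sig_gr_iff by (intro conjI exI[of _ "{c}"]) (simp_all add: q_gr_def)
next
  fix cs cs' c
  assume sub: "subseq cs' cs \<and> cs' \<noteq> [] \<and> hd cs' = hd cs \<and> last cs' = last cs
    \<and> Sig q_gr cs \<noteq> None \<and> in_Sig q_gr c cs'"
  then obtain S where "Sig q_gr cs = Some S" by blast
  note cs = Sig_q_gr_Some[OF this]
  have "set cs' \<subseteq> set cs" using sub by (auto elim: list_emb_set)
  moreover obtain W where "W \<noteq> {}" "W \<subseteq> set cs'" "u_gr c = \<Union> (u_gr ` W)"
    using sub unfolding in_Sig_gr_iff by blast
  ultimately show "in_Sig q_gr c cs"
    using sub cs unfolding in_Sig_gr_iff by (intro conjI exI[of _ W]) auto
qed (auto simp: q_gr_def K_gr_iff in_Sig_gr_iff intro: finite_subset)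

section \<open>Conditions of q_gr and forgetfulness\<close>

lemma Qset_q_gr_iff:
  "c \<in> Qset q_gr \<longleftrightarrow> (\<forall>n. c n \<in> K_gr) \<and> mdn_gr (c 0) = 0
     \<and> (\<forall>n. linked (c n) (c (Suc n)))
     \<and> filterlim (\<lambda>n. real (mdn_gr (c n))) at_top sequentially"
  by (simp add: Qset_def q_gr_def)

lemma qle_q_gr_iff:
  "qle q_gr c d \<longleftrightarrow> (\<exists>i0 (ns :: nat \<Rightarrow> nat). \<forall>i\<ge>i0. ns i < ns (Suc i)
     \<and> in_Sig q_gr (d i) (map c [ns i..<ns (Suc i)])
     \<and> mdn_gr (d i) = mdn_gr (c (ns i))
     \<and> mup_gr (d i) = mup_gr (c (ns (Suc i) - 1)))"
  by (simp add: qle_def q_gr_def)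

lemma Qset_q_gr_segment:
  assumes "c \<in> Qset q_gr"
  shows "set (map c [a..<b]) \<subseteq> K_gr" "successively linked (map c [a..<b])"
  using assms unfolding Qset_q_gr_iff successively_conv_nth by auto

lemma Qset_q_gr_mdn_strict_mono:
  assumes "c \<in> Qset q_gr"
  shows "strict_mono (\<lambda>n. mdn_gr (c n))"
proof -
  have "mdn_gr (c n) < mdn_gr (c (Suc n))" for n
  proof -
    have "c n \<in> K_gr" "linked (c n) (c (Suc n))" using assms unfolding Qset_q_gr_iff by blast+
    then show ?thesis unfolding K_gr_iff by simp
  qed
  then show ?thesis by (simp add: strict_mono_Suc_iff)
qed

lemma Qset_q_gr_mdn_eq:
  assumes "c1 \<in> Qset q_gr" "c2 \<in> Qset q_gr" "n \<le> k" "\<forall>i<k. c1 i = c2 i"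
  shows "mdn_gr (c1 n) = mdn_gr (c2 n)"
proof (cases n)
  case (Suc m)
  then have "mup_gr (c1 m) = mup_gr (c2 m)" using assms(3,4) by simp
  then show ?thesis using assms(1,2) Suc unfolding Qset_q_gr_iff by metis
qed (use assms(1,2) in \<open>simp add: Qset_q_gr_iff\<close>)

lemma in_Sig_gr_append_segment:
  assumes c: "c \<in> Qset q_gr" and e: "Sig_seq q_gr e (map c [n..<k])"
    and "n \<le> k" "k < m" and W: "W \<noteq> {}" "W \<subseteq> c ` {k..<m}"
  shows "in_Sig q_gr (mdn_gr (c n), mdn_gr (c m), \<Union> (u_gr ` W)) (e @ map c [k..<m])"
proof -
  have linked_Suc: "linked (c i) (c (Suc i))" for i using c unfolding Qset_q_gr_iff by blast
  have "mdn_gr (c m) = mup_gr (c (m - 1))" using linked_Suc[of "m - 1"] \<open>k < m\<close> by simp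
  then have last: "mdn_gr (c m) = mup_gr (last (e @ map c [k..<m]))"
    using \<open>k < m\<close> by (simp add: last_map)
  show ?thesis
  proof (cases "n < k")
    case False
    then have "n = k" "e = []" using \<open>n \<le> k\<close> Sig_seq_Nil_iff[OF e] by simp_all
    then show ?thesis
      unfolding in_Sig_gr_iff using Qset_q_gr_segment[OF c] W last \<open>k < m\<close>
      by (intro conjI exI[of _ W]) (auto simp: hd_map)
  next
    case True
    then have "e \<noteq> []" using Sig_seq_Nil_iff[OF e] by simp
    note ends = Sig_seq_gr_ends[OF e this]
    have "successively linked e"
      using Sig_seq_gr_linked_iff[OF e] Qset_q_gr_segment(2)[OF c] by blast
    moreover have "linked (last e) (hd (map c [k..<m]))"
      using ends True \<open>k < m\<close> linked_Suc[of "k - 1"] by (simp add: last_map hd_map)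
    ultimately have "successively linked (e @ map c [k..<m])"
      using Qset_q_gr_segment(2)[OF c] by (simp add: successively_append_iff)
    moreover have "mdn_gr (c n) = mdn_gr (hd (e @ map c [k..<m]))"
      using ends \<open>e \<noteq> []\<close> True by (simp add: hd_map)
    ultimately show ?thesis
      unfolding in_Sig_gr_iff
      using Qset_q_gr_segment(1)[OF c] Sig_seq_gr_K[OF e] W last \<open>e \<noteq> []\<close>
      by (intro conjI exI[of _ W]) auto
  qed
qed

lemma increasing_from_ge:
  assumes "\<forall>i\<ge>i0. (ns :: nat \<Rightarrow> nat) i < ns (Suc i)"
  shows "m \<le> ns (i0 + m)"
proof (induction m)
  case (Suc m)
  moreover have "ns (i0 + m) < ns (Suc (i0 + m))" using assms by simp
  ultimately show ?case by simp
qed simp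

lemma qle_q_gr_late_block:
  assumes c1: "c1 \<in> Qset q_gr" and c2: "c2 \<in> Qset q_gr" and "qle q_gr c1 c2"
  obtains j m W where "N \<le> j" "N < m" "W \<noteq> {}" "W \<subseteq> c1 ` {N..<m}"
    "u_gr (c2 j) = \<Union> (u_gr ` W)" "mdn_gr (c1 m) = mdn_gr (c2 (Suc j))"
proof -
  obtain i0 ns where ns: "\<forall>i\<ge>i0. ns i < ns (Suc i)
     \<and> in_Sig q_gr (c2 i) (map c1 [ns i..<ns (Suc i)])
     \<and> mup_gr (c2 i) = mup_gr (c1 (ns (Suc i) - 1))"
    using assms(3) unfolding qle_q_gr_iff by blast
  define j where "j = i0 + N"
  have "N \<le> ns j"
    unfolding j_def using ns by (intro increasing_from_ge) blast
  moreover have j: "ns j < ns (Suc j)" "in_Sig q_gr (c2 j) (map c1 [ns j..<ns (Suc j)])"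
     "mup_gr (c2 j) = mup_gr (c1 (ns (Suc j) - 1))"
    using ns unfolding j_def by auto
  ultimately have "N < ns (Suc j)" by simp
  have "linked (c1 i) (c1 (Suc i))" "linked (c2 i) (c2 (Suc i))" for i
    using c1 c2 unfolding Qset_q_gr_iff by blast+
  moreover have "Suc (ns (Suc j) - 1) = ns (Suc j)" using \<open>N < ns (Suc j)\<close> by simp
  ultimately have mdn_eq: "mdn_gr (c1 (ns (Suc j))) = mdn_gr (c2 (Suc j))" using j(3) by metis
  obtain W
    where W: "W \<noteq> {}" "W \<subseteq> set (map c1 [ns j..<ns (Suc j)])" "u_gr (c2 j) = \<Union> (u_gr ` W)"
    using j(2) unfolding in_Sig_gr_iff by blast
  have "set (map c1 [ns j..<ns (Suc j)]) \<subseteq> c1 ` {N..<ns (Suc j)}"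
    using \<open>N \<le> ns j\<close> by auto
  moreover have "N \<le> j" unfolding j_def by simp
  ultimately show thesis
    using that[OF _ \<open>N < ns (Suc j)\<close> W(1) _ W(3) mdn_eq] W(2) by blast
qed

lemma forgetful_q_gr: "forgetful q_gr"
  unfolding forgetful_def
proof (intro ballI allI impI)
  fix c1 c2 n k e1 e2
  assume c1: "c1 \<in> Qset q_gr" and c2: "c2 \<in> Qset q_gr"
    and "qle q_gr c1 c2 \<and> n \<le> k \<and> (\<forall>i<k. c1 i = c2 i)
      \<and> Sig_seq q_gr e1 (map c1 [n..<k]) \<and> Sig_seq q_gr e2 (map c1 [n..<k])"
  then have le: "qle q_gr c1 c2" and "n \<le> k" and agree: "\<forall>i<k. c1 i = c2 i"
    and e1: "Sig_seq q_gr e1 (map c1 [n..<k])" and e2: "Sig_seq q_gr e2 (map c1 [n..<k])"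
    by blast+
  obtain j m W where "k + n \<le> j" "k + n < m" "W \<noteq> {}" "W \<subseteq> c1 ` {k + n..<m}"
    and u: "u_gr (c2 j) = \<Union> (u_gr ` W)" and mdn_eq: "mdn_gr (c1 m) = mdn_gr (c2 (Suc j))"
    using qle_q_gr_late_block[OF c1 c2 le] .
  then have "k < m" "n < Suc j" "W \<subseteq> c1 ` {k..<m}" by auto
  note append = in_Sig_gr_append_segment[OF c1 _ \<open>n \<le> k\<close> \<open>k < m\<close> \<open>W \<noteq> {}\<close> this(3)]
  define c where "c = (mdn_gr (c1 n), mdn_gr (c1 m), u_gr (c2 j))"
  have "linked (c2 j) (c2 (Suc j))" using c2 unfolding Qset_q_gr_iff by blast
  then have "in_Sig q_gr c (map c2 [n..<Suc j])"
    unfolding in_Sig_gr_iff c_def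
    using Qset_q_gr_segment[OF c2] Qset_q_gr_mdn_eq[OF c1 c2 \<open>n \<le> k\<close> agree] mdn_eq \<open>n < Suc j\<close>
    by (intro conjI exI[of _ "{c2 j}"]) (auto simp: hd_map last_map simp del: upt_Suc)
  moreover have "in_Sig q_gr c (e1 @ map c1 [k..<m])" "in_Sig q_gr c (e2 @ map c1 [k..<m])"
    unfolding c_def u using append[OF e1] append[OF e2] .
  ultimately show "\<exists>m1 m2 c. m1 > k \<and> m2 > n \<and> mdn q_gr (c1 m1) = mdn q_gr (c2 m2)
      \<and> in_Sig q_gr c (e1 @ map c1 [k..<m1])
      \<and> in_Sig q_gr c (e2 @ map c1 [k..<m1])
      \<and> in_Sig q_gr c (map c2 [n..<m2])"
    using \<open>k < m\<close> \<open>n < Suc j\<close> mdn_eq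
    by (intro exI[of _ m] exI[of _ "Suc j"] exI[of _ c]) (simp add: q_gr_def)
qed

section \<open>The game\<close>

lemma qle_refl:
  assumes "is_pcrf q" "c \<in> Qset q"
  shows "qle q c c"
  unfolding qle_def
proof (intro exI[of _ 0] exI[of _ id] allI impI conjI)
  fix i
  have "c i \<in> K q" using assms(2) unfolding Qset_def by blast
  moreover have "\<forall>c\<in>K q. in_Sig q c [c]"
    using assms(1) unfolding is_pcrf_def by (elim conjE)
  ultimately show "in_Sig q (c i) (map c [id i..<id (Suc i)])" by simp
qed simp_all

lemma restr_self: "restr r h a a = h a"
  unfolding restr_def pos_le_def by simp

lemma legal_uptoD:
  assumes "legal_upto q r \<sigma> h a" "b \<in> pos r" "pos_le r b a"
  shows "h b \<in> Qset q"
    and "g \<in> pos r \<Longrightarrow> pos_lt r g b \<Longrightarrow> qle q (\<sigma> (restr r h g) g) (h b)"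
  using assms unfolding legal_upto_def by blast+

lemma empty_wins_card_ofI:
  fixes \<A> :: "'i set" and P :: "'i \<Rightarrow> (nat \<Rightarrow> 'c) \<Rightarrow> bool"
  assumes "is_pcrf q"
    and dense: "\<And>G c. G \<in> \<A> \<Longrightarrow> c \<in> Qset q \<Longrightarrow> \<exists>d. d \<in> Qset q \<and> qle q c d \<and> P G d"
    and upward: "\<And>G d d'. G \<in> \<A> \<Longrightarrow> P G d \<Longrightarrow> d' \<in> Qset q \<Longrightarrow> qle q d d' \<Longrightarrow> P G d'"
    and no_generic: "\<And>d. d \<in> Qset q \<Longrightarrow> \<exists>G\<in>\<A>. \<not> P G d"
  shows "empty_wins q (card_of \<A>)"
proof -
  define answer where "answer G c = (SOME d. d \<in> Qset q \<and> qle q c d \<and> P G d)" for G c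
  have answer: "answer G c \<in> Qset q" "qle q c (answer G c)" "P G (answer G c)"
    if "G \<in> \<A>" "c \<in> Qset q" for G c
    unfolding answer_def using someI_ex[OF dense[OF that]] by blast+
  define \<sigma> :: "('i option \<Rightarrow> nat \<Rightarrow> 'c) \<Rightarrow> 'i option \<Rightarrow> nat \<Rightarrow> 'c" where
    "\<sigma> hist a = (case a of None \<Rightarrow> hist None | Some G \<Rightarrow> answer G (hist a))" for hist a
  let ?r = "card_of \<A>"
  have pos_Some: "Some G \<in> pos ?r \<longleftrightarrow> G \<in> \<A>" for G
    unfolding pos_def Field_card_of by auto
  have "\<sigma> (restr ?r h a) a \<in> Qset q \<and> qle q (h a) (\<sigma> (restr ?r h a) a)"
    if "a \<in> pos ?r" "legal_upto q ?r \<sigma> h a" for h a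
  proof -
    have "h a \<in> Qset q" using legal_uptoD(1)[OF that(2,1)] by (simp add: pos_le_def)
    then show ?thesis
      using qle_refl[OF assms(1)] answer[of _ "h a"] that(1) pos_Some
      by (cases a) (simp_all add: \<sigma>_def restr_self)
  qed
  moreover have False if legal: "\<forall>a\<in>pos ?r. legal_upto q ?r \<sigma> h a" for h
  proof -
    have last: "None \<in> pos ?r" unfolding pos_def by simp
    then have legal_last: "legal_upto q ?r \<sigma> h None" using legal by blast
    then have "h None \<in> Qset q" using last by (rule legal_uptoD) (simp add: pos_le_def)
    then obtain G where G: "G \<in> \<A>" "\<not> P G (h None)" using no_generic by blast
    then have "Some G \<in> pos ?r" using pos_Some by blast
    have "pos_le ?r (Some G) None" by (simp add: pos_le_def)
    with legal_last \<open>Some G \<in> pos ?r\<close> have "h (Some G) \<in> Qset q" by (rule legal_uptoD)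
    moreover have "qle q (\<sigma> (restr ?r h (Some G)) (Some G)) (h None)"
      by (rule legal_uptoD(2)[OF legal_last last _ \<open>Some G \<in> pos ?r\<close>]) (simp_all add: pos_le_def)
    ultimately have "qle q (answer G (h (Some G))) (h None)" "P G (answer G (h (Some G)))"
      using answer G(1) by (simp_all add: \<sigma>_def restr_self)
    then show False using upward G \<open>h None \<in> Qset q\<close> by blast
  qed
  ultimately show ?thesis unfolding empty_wins_def by (intro exI[of _ \<sigma>]) blast
qed

definition gr_union :: "(nat \<Rightarrow> gr_creature) \<Rightarrow> nat set" where
  "gr_union d = (\<Union>n. u_gr (d n))"

lemma infinite_gr_union:
  assumes "d \<in> Qset q_gr" shows "infinite (gr_union d)"
  unfolding infinite_nat_iff_unbounded_le
proof
  fix m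
  have "d m \<in> K_gr" using assms unfolding Qset_q_gr_iff by blast
  then have "u_gr (d m) \<noteq> {}" "u_gr (d m) \<subseteq> {mdn_gr (d m)..<mup_gr (d m)}"
    unfolding K_gr_iff by simp_all
  then obtain x where "x \<in> u_gr (d m)" by blast
  moreover have "mdn_gr (d m) \<le> x" using \<open>x \<in> u_gr (d m)\<close> \<open>u_gr (d m) \<subseteq> _\<close> by auto
  moreover have "m \<le> mdn_gr (d m)"
    using strict_mono_imp_increasing[OF Qset_q_gr_mdn_strict_mono[OF assms]] .
  ultimately show "\<exists>x\<ge>m. x \<in> gr_union d"
    unfolding gr_union_def by (intro exI[of _ x]) auto
qed

lemma finite_gr_union_diff:
  assumes "d \<in> Qset q_gr" "qle q_gr c d"
  shows "finite (gr_union d - gr_union c)"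
proof -
  obtain i0 ns where ns: "\<forall>i\<ge>i0. in_Sig q_gr (d i) (map c [ns i..<ns (Suc i)])"
    using assms(2) unfolding qle_q_gr_iff by blast
  have late: "u_gr (d i) \<subseteq> gr_union c" if "i \<ge> i0" for i
  proof -
    have "in_Sig q_gr (d i) (map c [ns i..<ns (Suc i)])" using ns that by blast
    then obtain W where W: "W \<subseteq> set (map c [ns i..<ns (Suc i)])" "u_gr (d i) = \<Union> (u_gr ` W)"
      unfolding in_Sig_gr_iff by blast
    then have "W \<subseteq> range c" by auto
    then have "\<Union> (u_gr ` W) \<subseteq> gr_union c" unfolding gr_union_def by blast
    then show ?thesis using W(2) by simp
  qed
  have "gr_union d - gr_union c \<subseteq> (\<Union>i<i0. u_gr (d i))"
  proof
    fix x assume "x \<in> gr_union d - gr_union c"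
    then obtain i where "x \<in> u_gr (d i)" "x \<notin> gr_union c" unfolding gr_union_def by blast
    moreover from this have "i < i0" using late by (meson not_le subsetD)
    ultimately show "x \<in> (\<Union>i<i0. u_gr (d i))" by blast
  qed
  moreover have "finite (u_gr (d i))" for i
  proof -
    have "d i \<in> K_gr" using assms(1) unfolding Qset_q_gr_iff by blast
    then have "u_gr (d i) \<subseteq> {mdn_gr (d i)..<mup_gr (d i)}" unfolding K_gr_iff by blast
    then show ?thesis using finite_subset by blast
  qed
  ultimately show ?thesis by (simp add: finite_subset)
qed

lemma groupwise_dense_almost_subset:
  assumes "groupwise_dense G" "A \<in> G" "infinite B" "finite (B - A)"
  shows "B \<in> G"
proof -
  have "\<forall>A\<in>G. \<forall>B. infinite B \<and> finite (B - A) \<longrightarrow> B \<in> G"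
    using assms(1) unfolding groupwise_dense_def by (elim conjE)
  then show ?thesis using assms(2-4) by blast
qed

lemma groupwise_dense_gr_union_qle:
  assumes "groupwise_dense G" "gr_union c \<in> G" "d \<in> Qset q_gr" "qle q_gr c d"
  shows "gr_union d \<in> G"
  using groupwise_dense_almost_subset[OF assms(1,2)]
    infinite_gr_union[OF assms(3)] finite_gr_union_diff[OF assms(3,4)] .

definition coarsen :: "(nat \<Rightarrow> gr_creature) \<Rightarrow> (nat \<Rightarrow> nat) \<Rightarrow> (nat \<Rightarrow> nat) \<Rightarrow> nat \<Rightarrow> gr_creature"
  where "coarsen c t s j = (mdn_gr (c (t j)), mdn_gr (c (t (Suc j))), u_gr (c (s j)))"

lemma coarsen_Qset_qle:
  assumes c: "c \<in> Qset q_gr" and t: "strict_mono t" "t 0 = 0"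
    and s: "\<And>j. t j \<le> s j \<and> s j < t (Suc j)"
  shows "coarsen c t s \<in> Qset q_gr" "qle q_gr c (coarsen c t s)"
proof -
  have cK: "c n \<in> K_gr" and linked_Suc: "linked (c n) (c (Suc n))" for n
    using c unfolding Qset_q_gr_iff by blast+
  note mdn_mono = Qset_q_gr_mdn_strict_mono[OF c]
  have mdn_le: "mdn_gr (c m) \<le> mdn_gr (c n) \<longleftrightarrow> m \<le> n" for m n
    using strict_mono_less_eq[OF mdn_mono] by simp
  have t_less: "t j < t (Suc j)" for j using t(1) by (simp add: strict_mono_def)
  have "coarsen c t s j \<in> K_gr" for j
  proof -
    have "mdn_gr (c (t j)) \<le> mdn_gr (c (s j))" "mup_gr (c (s j)) \<le> mdn_gr (c (t (Suc j)))"
      using s[of j] linked_Suc[of "s j"] mdn_le by simp_all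
    moreover have "mdn_gr (c (t j)) < mdn_gr (c (t (Suc j)))"
      using t_less mdn_le by (meson not_le)
    ultimately show ?thesis
      using cK[of "s j"] unfolding K_gr_iff coarsen_def by auto
  qed
  moreover have "filterlim (\<lambda>j. real (mdn_gr (c (t j)))) at_top sequentially"
  proof -
    have "strict_mono (\<lambda>j. mdn_gr (c (t j)))"
      using mdn_mono t(1) by (simp add: strict_mono_def)
    then show ?thesis
      using filterlim_compose[OF filterlim_real_sequentially filterlim_subseq] by blast
  qed
  ultimately show "coarsen c t s \<in> Qset q_gr"
    using c t(2) unfolding Qset_q_gr_iff by (simp add: coarsen_def)
  have "in_Sig q_gr (coarsen c t s j) (map c [t j..<t (Suc j)])" for j
    unfolding in_Sig_gr_iff
    using Qset_q_gr_segment[OF c] t_less[of j] s[of j] linked_Suc[of "t (Suc j) - 1"]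
    by (intro conjI exI[of _ "{c (s j)}"]) (auto simp: coarsen_def hd_map last_map simp del: upt_Suc)
  moreover have "Suc (t (Suc j) - 1) = t (Suc j)" for j using t_less[of j] by simp
  ultimately show "qle q_gr c (coarsen c t s)"
    unfolding qle_q_gr_iff using t_less linked_Suc
    by (intro exI[of _ 0] exI[of _ t]) (simp add: coarsen_def)
qed

lemma groupwise_dense_gr_union_extension:
  assumes c: "c \<in> Qset q_gr" and G: "groupwise_dense G"
  shows "\<exists>d. d \<in> Qset q_gr \<and> qle q_gr c d \<and> gr_union d \<in> G"
proof -
  let ?a = "\<lambda>n. mdn_gr (c n)"
  have "\<forall>ns :: nat \<Rightarrow> nat. strict_mono ns \<longrightarrow>
      (\<exists>w. infinite w \<and> (\<Union>i\<in>w. {ns i..<ns (Suc i)}) \<in> G)"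
    using G unfolding groupwise_dense_def by (elim conjE)
  then obtain w where w: "infinite w" "(\<Union>i\<in>w. {?a i..<?a (Suc i)}) \<in> G"
    using Qset_q_gr_mdn_strict_mono[OF c] by blast
  define e where "e = enumerate w"
  have e_less: "e j < e (Suc j)" for j unfolding e_def using w(1) by (simp add: enumerate_mono)
  \<comment> \<open>the j-th block [t j, t (Suc j)) of c ends with the selected creature e j\<close>
  define t where "t j = (case j of 0 \<Rightarrow> 0 | Suc i \<Rightarrow> Suc (e i))" for j
  have t_le: "t j \<le> e j" for j
    using e_less by (cases j) (auto simp: t_def Suc_leI)
  then have "strict_mono t" unfolding strict_mono_Suc_iff by (simp add: t_def le_imp_less_Suc)
  moreover have "t 0 = 0" "\<And>j. t j \<le> e j \<and> e j < t (Suc j)" using t_le by (simp_all add: t_def)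
  ultimately have d: "coarsen c t e \<in> Qset q_gr" "qle q_gr c (coarsen c t e)"
    using coarsen_Qset_qle[OF c] by blast+
  have "u_gr (c n) \<subseteq> {?a n..<?a (Suc n)}" for n
    using c unfolding Qset_q_gr_iff K_gr_iff by metis
  then have "gr_union (coarsen c t e) \<subseteq> (\<Union>i\<in>w. {?a i..<?a (Suc i)})"
    using enumerate_in_set[OF w(1)] unfolding gr_union_def coarsen_def e_def by fastforce
  then have "finite (gr_union (coarsen c t e) - (\<Union>i\<in>w. {?a i..<?a (Suc i)}))"
    by (simp add: Diff_eq_empty_iff[THEN iffD2])
  then have "gr_union (coarsen c t e) \<in> G"
    by (rule groupwise_dense_almost_subset[OF G w(2) infinite_gr_union[OF d(1)]])
  then show ?thesis using d by blast
qed

theorem mainTheorem2: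
  shows "is_pcrf q_gr \<and> forgetful q_gr
    \<and> (\<forall>\<A> :: nat set set set. (\<forall>G \<in> \<A>. groupwise_dense G) \<and> \<Inter>\<A> = {} \<longrightarrow>
         (\<exists>r :: nat set set rel. Card_order r \<and> (card_of (Field r), card_of \<A>) \<in> ordLeq
            \<and> empty_wins q_gr r))"
proof (intro conjI allI impI)
  show "is_pcrf q_gr" by (rule is_pcrf_q_gr)
  show "forgetful q_gr" by (rule forgetful_q_gr)
  fix \<A> :: "nat set set set"
  assume \<A>: "(\<forall>G \<in> \<A>. groupwise_dense G) \<and> \<Inter>\<A> = {}"
  have "empty_wins q_gr (card_of \<A>)"
  proof (rule empty_wins_card_ofI[OF is_pcrf_q_gr, where P = "\<lambda>G d. gr_union d \<in> G"])
    show "\<exists>d. d \<in> Qset q_gr \<and> qle q_gr c d \<and> gr_union d \<in> G"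
      if "G \<in> \<A>" "c \<in> Qset q_gr" for G c
      using groupwise_dense_gr_union_extension that \<A> by blast
    show "gr_union d' \<in> G" if "G \<in> \<A>" "gr_union d \<in> G" "d' \<in> Qset q_gr" "qle q_gr d d'"
      for G d d'
      using groupwise_dense_gr_union_qle that \<A> by blast
    show "\<exists>G\<in>\<A>. gr_union d \<notin> G" for d
      using \<A> by blast
  qed
  then show "\<exists>r :: nat set set rel. Card_order r \<and> (card_of (Field r), card_of \<A>) \<in> ordLeq
      \<and> empty_wins q_gr r"
    by (intro exI[of _ "card_of \<A>"] conjI card_of_Card_order)
      (simp_all add: Field_card_of ordLeq_refl[OF card_of_Card_order])
qed

end
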